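(* For every $a\ge0$, the set $\mathcal{P}^+$ is dense in $\mathcal{L}^+_a$ with respect to the topology of $\mathcal{A}_a$.
   Context: For $b>0$, $\|f\|_b=\sup_{k\in\mathbb{N}_0}b^{-k}|f^{(k)}(0)|$; $\mathcal{A}_a=\{f\text{ entire}:\|f\|_b<\infty\ \forall b>a\}$ with topology generated by $\{\|\cdot\|_b:b>a\}$. $\mathcal{L}^+$ is the set of entire functions $Cz^le^{\alpha z}\prod_{j\ge1}(1+\beta_jz)$ with $C\in\mathbb{C}$, $l\in\mathbb{N}_0$, $\alpha\ge0$, $\beta_j\ge\beta_{j+1}\ge0$, $\sum_j\beta_j<\infty$; $\mathcal{L}^+_a=\mathcal{L}^+\cap\mathcal{A}_a$; $\mathcal{P}^+$ is the set of polynomials belonging to $\mathcal{L}^+$. *)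

theory Defs
  imports "HOL-Analysis.Analysis" "HOL-Computational_Algebra.Polynomial"
begin

definition seminorm_b :: "real \<Rightarrow> (complex \<Rightarrow> complex) \<Rightarrow> ereal" where
  "seminorm_b b f = (SUP k::nat. ereal (norm ((deriv ^^ k) f 0) / b ^ k))"

definition A_space :: "real \<Rightarrow> (complex \<Rightarrow> complex) set" where
  "A_space a = {f. f holomorphic_on UNIV \<and> (\<forall>b>a. seminorm_b b f < \<infinity>)}"

text \<open>The class L^+: functions C z^l e^{\<alpha> z} \<Prod>_{j\<ge>1} (1 + \<beta>_j z) with \<alpha> \<ge> 0,
  \<beta> nonincreasing, nonnegative and summable (indices shifted to start at 0);
  the infinite product is the pointwise limit of the partial products.\<close>
definition L_plus :: "(complex \<Rightarrow> complex) set" where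
  "L_plus = {f. \<exists>(C::complex) (l::nat) (\<alpha>::real) (\<beta>::nat \<Rightarrow> real).
      \<alpha> \<ge> 0 \<and> (\<forall>j. \<beta> (Suc j) \<le> \<beta> j) \<and> (\<forall>j. \<beta> j \<ge> 0) \<and> summable \<beta> \<and>
      (\<forall>z. (\<lambda>n. C * z ^ l * exp (complex_of_real \<alpha> * z) *
               (\<Prod>j<n. 1 + complex_of_real (\<beta> j) * z)) \<longlonglongrightarrow> f z)}"

definition L_plus_a :: "real \<Rightarrow> (complex \<Rightarrow> complex) set" where
  "L_plus_a a = L_plus \<inter> A_space a"

definition P_plus :: "(complex \<Rightarrow> complex) set" where
  "P_plus = {f \<in> L_plus. \<exists>p::complex poly. f = poly p}"

end

theory Submission
  imports Defs "HOL-Complex_Analysis.Cauchy_Integral_Formula" "HOL-Library.Complex_Order"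
begin

(* Write f = C z^l e^(\<alpha> z) \<Prod>(1 + \<beta>_j z). Every factor has nonnegative Taylor coefficients,
   and (1 + \<alpha> z/(n+1))^(n+1) is coefficientwise below e^(\<alpha> z). Hence the polynomials
   Q_n = z^l (1 + \<alpha> z/(n+1))^(n+1) \<Prod>_{j<n} (1 + \<beta>_j z), which lie in P^+, satisfy
   0 \<le> Q_n \<le> f/C coefficientwise. For a function with nonnegative coefficients the maximum
   modulus on the unit disc is attained at 1, so Q_n(1) \<rightarrow> f(1)/C gives uniform convergence
   on the disc and, by Cauchy's estimates, convergence of every Taylor coefficient. Finally the
   coefficients of C Q_n - f are dominated by those of f, whose b'-seminorm is finite for some
   a < b' < b; this makes the tail of the b-seminorm uniformly small, and the finitely many
   remaining coefficients converge. *)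

section \<open>Entire functions with nonnegative Taylor coefficients\<close>

abbreviation deriv0 :: "nat \<Rightarrow> (complex \<Rightarrow> complex) \<Rightarrow> complex" where
  "deriv0 k g \<equiv> (deriv ^^ k) g 0"

text \<open>In the ordering of \<open>Complex_Order\<close>, \<open>z \<le> w\<close> means \<open>Im z = Im w\<close> and \<open>Re z \<le> Re w\<close>;
  so these are comparisons of real Taylor coefficients.\<close>

definition coeffs_nonneg :: "(complex \<Rightarrow> complex) \<Rightarrow> bool" where
  "coeffs_nonneg g \<longleftrightarrow> g holomorphic_on UNIV \<and> (\<forall>k. 0 \<le> deriv0 k g)"

definition coeffs_le :: "(complex \<Rightarrow> complex) \<Rightarrow> (complex \<Rightarrow> complex) \<Rightarrow> bool" where
  "coeffs_le g h \<longleftrightarrow> (\<forall>k. deriv0 k g \<le> deriv0 k h)"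

lemma coeffs_le_refl: "coeffs_le f f"
  by (simp add: coeffs_le_def)

lemma coeffs_le_trans: "coeffs_le f g \<Longrightarrow> coeffs_le g h \<Longrightarrow> coeffs_le f h"
  unfolding coeffs_le_def using order_trans by blast

lemma coeffs_le_chain:
  assumes "\<And>n. coeffs_le (G n) (G (Suc n))" "n \<le> m"
  shows "coeffs_le (G n) (G m)"
  using assms(2)
  by (induction m rule: dec_induct) (use assms(1) coeffs_le_trans coeffs_le_refl in blast)+

lemma coeffs_nonneg_holomorphic: "coeffs_nonneg f \<Longrightarrow> f holomorphic_on UNIV"
  by (simp add: coeffs_nonneg_def)

lemma coeffs_nonneg_le:
  "coeffs_nonneg f \<Longrightarrow> coeffs_le f g \<Longrightarrow> g holomorphic_on UNIV \<Longrightarrow> coeffs_nonneg g"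
  unfolding coeffs_nonneg_def coeffs_le_def using order_trans by blast

lemma coeffs_nonneg_const: "0 \<le> c \<Longrightarrow> coeffs_nonneg (\<lambda>z. c)"
  by (auto simp: coeffs_nonneg_def)

lemma coeffs_nonneg_ident: "coeffs_nonneg (\<lambda>z. z)"
  by (auto simp: coeffs_nonneg_def less_eq_complex_def)

lemma coeffs_nonneg_mult:
  assumes "coeffs_nonneg f" "coeffs_nonneg g"
  shows "coeffs_nonneg (\<lambda>z. f z * g z)"
proof -
  have hol: "f holomorphic_on UNIV" "g holomorphic_on UNIV"
    using assms by (auto simp: coeffs_nonneg_def)
  have "0 \<le> deriv0 k (\<lambda>z. f z * g z)" for k
    unfolding higher_deriv_mult[OF hol open_UNIV UNIV_I] using assms
    by (intro sum_nonneg mult_nonneg_nonneg) (auto simp: coeffs_nonneg_def less_eq_complex_def)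
  then show ?thesis
    using hol by (auto simp: coeffs_nonneg_def holomorphic_on_mult)
qed

lemma coeffs_le_mult:
  assumes "coeffs_nonneg f1" "coeffs_nonneg g1" "coeffs_nonneg f2" "coeffs_nonneg g2"
    and "coeffs_le f1 f2" "coeffs_le g1 g2"
  shows "coeffs_le (\<lambda>z. f1 z * g1 z) (\<lambda>z. f2 z * g2 z)"
proof -
  have hol: "f1 holomorphic_on UNIV" "g1 holomorphic_on UNIV"
    "f2 holomorphic_on UNIV" "g2 holomorphic_on UNIV"
    using assms by (auto simp: coeffs_nonneg_def)
  have "deriv0 k (\<lambda>z. f1 z * g1 z) \<le> deriv0 k (\<lambda>z. f2 z * g2 z)" for k
    unfolding higher_deriv_mult[OF hol(1,2) open_UNIV UNIV_I]
      higher_deriv_mult[OF hol(3,4) open_UNIV UNIV_I]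
    using assms unfolding coeffs_nonneg_def coeffs_le_def
    by (intro sum_mono mult_mono) (auto simp: less_eq_complex_def)
  then show ?thesis
    by (auto simp: coeffs_le_def)
qed

lemma coeffs_nonneg_power: "coeffs_nonneg f \<Longrightarrow> coeffs_nonneg (\<lambda>z. f z ^ n)"
  by (induction n) (auto intro: coeffs_nonneg_mult coeffs_nonneg_const simp: less_eq_complex_def)

lemma coeffs_le_power:
  "coeffs_nonneg f \<Longrightarrow> coeffs_nonneg g \<Longrightarrow> coeffs_le f g \<Longrightarrow>
    coeffs_le (\<lambda>z. f z ^ n) (\<lambda>z. g z ^ n)"
  by (induction n) (auto intro!: coeffs_le_mult coeffs_nonneg_power simp: coeffs_le_refl)

lemma coeffs_nonneg_prod:
  "(\<And>j. j \<in> A \<Longrightarrow> coeffs_nonneg (f j)) \<Longrightarrow> coeffs_nonneg (\<lambda>z. \<Prod>j\<in>A. f j z)"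
  by (induction A rule: infinite_finite_induct)
    (auto intro: coeffs_nonneg_mult coeffs_nonneg_const simp: less_eq_complex_def)

lemma coeffs_nonneg_diff:
  assumes "coeffs_nonneg f" "coeffs_nonneg g" "coeffs_le f g"
  shows "coeffs_nonneg (\<lambda>z. g z - f z)"
proof -
  have hol: "f holomorphic_on UNIV" "g holomorphic_on UNIV"
    using assms by (auto simp: coeffs_nonneg_def)
  have "0 \<le> deriv0 k (\<lambda>z. g z - f z)" for k
    unfolding higher_deriv_diff[OF hol(2,1) open_UNIV UNIV_I] using assms(3)
    by (auto simp: coeffs_le_def)
  then show ?thesis
    using hol by (auto simp: coeffs_nonneg_def intro!: holomorphic_intros)
qed

lemma higher_deriv_linear:
  "(deriv ^^ n) (\<lambda>w. 1 + c * w) = (\<lambda>z. if n = 0 then 1 + c * z else if n = 1 then c else 0)"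
proof (induction n)
  case (Suc n)
  have "deriv (\<lambda>w. 1 + c * w) z = c" for z
    by (rule DERIV_imp_deriv) (auto intro!: derivative_eq_intros)
  then show ?case
    unfolding funpow.simps(2) o_def Suc.IH by (cases "n = 0") (auto simp: fun_eq_iff)
qed simp

lemma higher_deriv_exp_linear: "(deriv ^^ n) (\<lambda>w. exp (c * w)) = (\<lambda>z. c ^ n * exp (c * z))"
proof (induction n)
  case (Suc n)
  have "deriv (\<lambda>z. c ^ n * exp (c * z)) z = c ^ Suc n * exp (c * z)" for z
    by (rule DERIV_imp_deriv) (auto intro!: derivative_eq_intros simp: algebra_simps)
  then show ?case
    unfolding funpow.simps(2) o_def Suc.IH by (auto simp: fun_eq_iff)
qed simp

lemma coeffs_nonneg_linear: "0 \<le> c \<Longrightarrow> coeffs_nonneg (\<lambda>z. 1 + of_real c * z)"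
  by (auto simp: coeffs_nonneg_def higher_deriv_linear less_eq_complex_def intro!: holomorphic_intros)

lemma coeffs_nonneg_exp_linear: "0 \<le> c \<Longrightarrow> coeffs_nonneg (\<lambda>z. exp (of_real c * z))"
  by (auto simp: coeffs_nonneg_def higher_deriv_exp_linear less_eq_complex_def
      simp flip: of_real_power exp_of_real intro!: holomorphic_intros)

lemma coeffs_le_one_linear: "0 \<le> c \<Longrightarrow> coeffs_le (\<lambda>z. 1) (\<lambda>z. 1 + of_real c * z)"
  by (auto simp: coeffs_le_def higher_deriv_linear less_eq_complex_def)

lemma coeffs_le_linear_exp_linear:
  "0 \<le> c \<Longrightarrow> coeffs_le (\<lambda>z. 1 + of_real c * z) (\<lambda>z. exp (of_real c * z))"
  by (auto simp: coeffs_le_def higher_deriv_linear higher_deriv_exp_linear less_eq_complex_def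
      simp flip: of_real_power)

section \<open>Coefficient convergence from below\<close>

lemma coeffs_nonneg_norm_le:
  assumes "coeffs_nonneg d" "norm z \<le> 1"
  shows "norm (d z) \<le> Re (d 1)"
proof -
  have hol: "d holomorphic_on ball 0 2"
    using assms(1) by (auto simp: coeffs_nonneg_def)
  define r where "r n = Re (deriv0 n d) / fact n" for n
  have "deriv0 n d = of_real (Re (deriv0 n d))" and r_nonneg: "0 \<le> r n" for n
    using assms(1) unfolding coeffs_nonneg_def
    by (auto simp: r_def less_eq_complex_def complex_eq_iff)
  then have real: "deriv0 n d / fact n = of_real (r n)" for n
    by (metis r_def of_real_divide of_real_fact)
  have sums_z: "(\<lambda>n. of_real (r n) * z ^ n) sums d z"
    using holomorphic_power_series[OF hol, of z] assms(2) by (simp add: real)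
  have "(\<lambda>n. complex_of_real (r n)) sums d 1"
    using holomorphic_power_series[OF hol, of 1] by (simp add: real)
  from sums_Re[OF this] have sums_1: "r sums Re (d 1)"
    by simp
  have term_le: "norm (of_real (r n) * z ^ n) \<le> r n" for n
    using r_nonneg[of n] assms(2)
    by (simp add: norm_mult norm_power mult_left_le power_le_one)
  have summable: "summable (\<lambda>n. norm (of_real (r n) * z ^ n))"
    by (rule summable_comparison_test[of _ r]) (use term_le sums_summable[OF sums_1] in auto)
  have "norm (d z) = norm (\<Sum>n. of_real (r n) * z ^ n)"
    using sums_unique[OF sums_z] by simp
  also have "\<dots> \<le> (\<Sum>n. norm (of_real (r n) * z ^ n))"
    by (rule summable_norm[OF summable])
  also have "\<dots> \<le> (\<Sum>n. r n)"
    by (rule suminf_le[OF term_le summable sums_summable[OF sums_1]])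
  also have "\<dots> = Re (d 1)"
    using sums_unique[OF sums_1] by simp
  finally show ?thesis .
qed

lemma higher_deriv_tendsto_of_uniform_on_unit_disc:
  assumes holF: "F holomorphic_on UNIV" and holG: "\<And>n. G n holomorphic_on UNIV"
    and bound: "\<And>n z. norm z \<le> 1 \<Longrightarrow> norm (F z - G n z) \<le> e n" and e: "e \<longlonglongrightarrow> 0"
  shows "(\<lambda>n. deriv0 k (G n)) \<longlonglongrightarrow> deriv0 k F"
proof -
  have bound_deriv: "norm (deriv0 k F - deriv0 k (G n)) \<le> fact k * e n" for n
  proof -
    have hol: "(\<lambda>z. F z - G n z) holomorphic_on UNIV"
      using holomorphic_on_diff[OF holF holG] .
    have "norm (deriv0 k (\<lambda>z. F z - G n z)) \<le> fact k * e n / 1 ^ k"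
    proof (rule Cauchy_inequality)
      show "(\<lambda>z. F z - G n z) holomorphic_on ball 0 1"
        using hol by (rule holomorphic_on_subset) simp
      show "continuous_on (cball 0 1) (\<lambda>z. F z - G n z)"
        using holomorphic_on_imp_continuous_on[OF hol] by (rule continuous_on_subset) simp
      show "norm (F z - G n z) \<le> e n" if "norm (0 - z) = 1" for z
        using bound that by simp
    qed simp
    then show ?thesis
      by (simp add: higher_deriv_diff[OF holF holG open_UNIV UNIV_I])
  qed
  have "(\<lambda>n. deriv0 k F - deriv0 k (G n)) \<longlonglongrightarrow> 0"
    by (rule Lim_null_comparison[OF always_eventually tendsto_mult_right_zero[OF e]])
      (use bound_deriv in blast)
  from tendsto_diff[OF tendsto_const this, of "deriv0 k F"] show ?thesis
    by simp
qed

lemma complex_le_tendsto: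
  fixes X :: "nat \<Rightarrow> complex"
  assumes "X \<longlonglongrightarrow> l" "\<forall>\<^sub>F n in sequentially. c \<le> X n"
  shows "c \<le> l"
proof -
  have "\<forall>\<^sub>F n in sequentially. Im (X n) = Im c"
    using assms(2) by eventually_elim (simp add: less_eq_complex_def)
  then have "(\<lambda>n. Im (X n)) \<longlonglongrightarrow> Im c"
    by (rule tendsto_eventually)
  then have "Im l = Im c"
    using tendsto_Im[OF assms(1)] LIMSEQ_unique by blast
  moreover have "Re c \<le> Re l"
    using assms(2)
    by (intro tendsto_le[OF _ tendsto_Re[OF assms(1)] tendsto_const])
      (simp_all add: eventually_mono less_eq_complex_def)
  ultimately show ?thesis
    by (simp add: less_eq_complex_def)
qed

text \<open>Uniform convergence on the unit disc comes from bounding \<open>G m - G n\<close>, which has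
  nonnegative coefficients, by its value at \<open>1\<close>.\<close>

lemma coeffs_le_limit:
  assumes nonneg: "\<And>n. coeffs_nonneg (G n)" and mono: "\<And>n. coeffs_le (G n) (G (Suc n))"
    and lim: "\<And>z. (\<lambda>n. G n z) \<longlonglongrightarrow> F z" and holF: "F holomorphic_on UNIV"
  shows "coeffs_le (G n) F"
proof -
  have bound: "norm (F z - G n z) \<le> Re (F 1) - Re (G n 1)" if "norm z \<le> 1" for z n
  proof (rule LIMSEQ_le)
    show "(\<lambda>m. norm (G m z - G n z)) \<longlonglongrightarrow> norm (F z - G n z)"
      "(\<lambda>m. Re (G m 1) - Re (G n 1)) \<longlonglongrightarrow> Re (F 1) - Re (G n 1)"
      by (intro tendsto_intros lim)+
    have "norm (G m z - G n z) \<le> Re (G m 1) - Re (G n 1)" if "n \<le> m" for m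
    proof -
      have "coeffs_nonneg (\<lambda>z. G m z - G n z)"
        using nonneg nonneg coeffs_le_chain[of G, OF mono that] by (rule coeffs_nonneg_diff)
      from coeffs_nonneg_norm_le[OF this \<open>norm z \<le> 1\<close>] show ?thesis
        by simp
    qed
    then show "\<exists>N. \<forall>m\<ge>N. norm (G m z - G n z) \<le> Re (G m 1) - Re (G n 1)"
      by blast
  qed
  have "(\<lambda>m. Re (F 1) - Re (G m 1)) \<longlonglongrightarrow> Re (F 1) - Re (F 1)"
    by (intro tendsto_intros lim)
  then have "(\<lambda>m. Re (F 1) - Re (G m 1)) \<longlonglongrightarrow> 0"
    by simp
  then have coeffs: "(\<lambda>m. deriv0 k (G m)) \<longlonglongrightarrow> deriv0 k F" for k
    using coeffs_nonneg_holomorphic[OF nonneg] bound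
    by (intro higher_deriv_tendsto_of_uniform_on_unit_disc[OF holF]) auto
  have "deriv0 k (G n) \<le> deriv0 k F" for k
    using coeffs_le_chain[of G, OF mono]
    by (intro complex_le_tendsto[OF coeffs] eventually_sequentiallyI[of n]) (simp add: coeffs_le_def)
  then show ?thesis
    by (simp add: coeffs_le_def)
qed

lemma coeffs_tendsto_of_le:
  assumes nonneg: "\<And>n. coeffs_nonneg (Q n)" and le: "\<And>n. coeffs_le (Q n) F"
    and holF: "F holomorphic_on UNIV" and lim: "(\<lambda>n. Q n 1) \<longlonglongrightarrow> F 1"
  shows "(\<lambda>n. deriv0 k (Q n)) \<longlonglongrightarrow> deriv0 k F"
proof (rule higher_deriv_tendsto_of_uniform_on_unit_disc[OF holF])
  show "Q n holomorphic_on UNIV" for n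
    using nonneg by (rule coeffs_nonneg_holomorphic)
  have "coeffs_nonneg F"
    using coeffs_nonneg_le[OF nonneg le holF] .
  then show "norm (F z - Q n z) \<le> Re (F 1 - Q n 1)" if "norm z \<le> 1" for n z
    using coeffs_nonneg_norm_le[OF coeffs_nonneg_diff[OF nonneg _ le] that] by simp
  show "(\<lambda>n. Re (F 1 - Q n 1)) \<longlonglongrightarrow> 0"
    using tendsto_Re[OF tendsto_diff[OF tendsto_const lim, of "F 1"]] by simp
qed

section \<open>Polynomial approximants in \<open>P\<^sup>+\<close>\<close>

lemma prod_lessThan_padded_list:
  fixes ys :: "real list" and g :: "real \<Rightarrow> complex"
  assumes "g 0 = 1" "length ys \<le> n"
  shows "(\<Prod>j<n. g (if j < length ys then ys ! j else 0)) = (\<Prod>x\<leftarrow>ys. g x)"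
  using assms(2)
proof (induction n rule: dec_induct)
  case base
  have "(\<Prod>x\<leftarrow>ys. g x) = (\<Prod>j = 0..<length ys. g (ys ! j))"
    by (subst prod.list_conv_set_nth) (auto intro: prod.cong)
  then show ?case
    by (simp add: atLeast0LessThan)
next
  case (step m)
  then show ?case
    using assms(1) by simp
qed

text \<open>Sorted decreasingly and padded with zeros, \<open>xs\<close> serves as the sequence \<open>\<beta>\<close> in the
  definition of \<^const>\<open>L_plus\<close>, with \<open>\<alpha> = 0\<close>.\<close>

lemma monomial_product_in_L_plus:
  assumes nonneg: "\<forall>x\<in>set xs. 0 \<le> x"
  shows "(\<lambda>z. C * z ^ l * (\<Prod>x\<leftarrow>xs. 1 + of_real x * z)) \<in> L_plus"
proof -
  define ys where "ys = rev (sort xs)"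
  define \<beta> where "\<beta> j = (if j < length ys then ys ! j else 0)" for j
  have mset_ys: "mset ys = mset xs"
    by (simp add: ys_def)
  have ys_nonneg: "\<forall>y\<in>set ys. 0 \<le> y"
    using nonneg by (simp add: ys_def)
  have \<beta>_nonneg: "0 \<le> \<beta> j" for j
    using ys_nonneg by (simp add: \<beta>_def)
  have \<beta>_antimono: "\<beta> (Suc j) \<le> \<beta> j" for j
  proof (cases "Suc j < length ys")
    case True
    have "sorted (rev ys)"
      by (simp add: ys_def)
    then show ?thesis
      using True by (simp add: \<beta>_def sorted_rev_nth_mono)
  qed (use \<beta>_nonneg in \<open>simp add: \<beta>_def\<close>)
  have "summable \<beta>"
    by (rule summable_finite[of "{..<length ys}"]) (auto simp: \<beta>_def)
  moreover have "(\<lambda>n. C * z ^ l * exp (complex_of_real 0 * z) * (\<Prod>j<n. 1 + of_real (\<beta> j) * z))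
      \<longlonglongrightarrow> C * z ^ l * (\<Prod>x\<leftarrow>xs. 1 + of_real x * z)" for z
  proof (rule tendsto_eventually, rule eventually_sequentiallyI)
    fix n assume "length ys \<le> n"
    then have "(\<Prod>j<n. 1 + of_real (\<beta> j) * z) = (\<Prod>x\<leftarrow>ys. 1 + complex_of_real x * z)"
      unfolding \<beta>_def by (intro prod_lessThan_padded_list) auto
    also have "\<dots> = (\<Prod>x\<leftarrow>xs. 1 + complex_of_real x * z)"
      using mset_ys by (metis mset_map prod_mset_prod_list)
    finally show "C * z ^ l * exp (complex_of_real 0 * z) * (\<Prod>j<n. 1 + of_real (\<beta> j) * z)
       = C * z ^ l * (\<Prod>x\<leftarrow>xs. 1 + of_real x * z)"
      by simp
  qed
  ultimately show ?thesis
    unfolding L_plus_def using \<beta>_nonneg \<beta>_antimono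
    by (intro CollectI exI[of _ C] exI[of _ l] exI[of _ "0::real"] exI[of _ \<beta>]) simp
qed

lemma monomial_product_in_P_plus:
  assumes "\<forall>x\<in>set xs. 0 \<le> x"
  shows "(\<lambda>z. C * z ^ l * (\<Prod>x\<leftarrow>xs. 1 + of_real x * z)) \<in> P_plus"
proof -
  have "poly (\<Prod>x\<leftarrow>xs. [:1, complex_of_real x:]) z = (\<Prod>x\<leftarrow>xs. 1 + of_real x * z)" for z
    by (induction xs) (auto simp: algebra_simps)
  then have "(\<lambda>z. C * z ^ l * (\<Prod>x\<leftarrow>xs. 1 + of_real x * z))
      = poly (smult C (monom 1 l * (\<Prod>x\<leftarrow>xs. [:1, complex_of_real x:])))"
    by (simp add: fun_eq_iff poly_monom)
  then show ?thesis
    using monomial_product_in_L_plus[OF assms] unfolding P_plus_def by blast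
qed

lemma prod_list_map_upt_eq_prod_lessThan: "(\<Prod>j\<leftarrow>[0..<n]. f j) = (\<Prod>j<n. f j)"
  by (induction n) (simp_all add: lessThan_Suc mult.commute)

context
  fixes l :: nat and \<alpha> :: real and \<beta> :: "nat \<Rightarrow> real"
  assumes \<alpha>_nonneg: "0 \<le> \<alpha>" and \<beta>_nonneg: "\<forall>j. 0 \<le> \<beta> j"
begin

definition partial_product :: "nat \<Rightarrow> complex \<Rightarrow> complex" where
  "partial_product n z = z ^ l * exp (of_real \<alpha> * z) * (\<Prod>j<n. 1 + of_real (\<beta> j) * z)"

definition polynomial_approximant :: "nat \<Rightarrow> complex \<Rightarrow> complex" where
  "polynomial_approximant n z =
     z ^ l * (1 + of_real (\<alpha> / Suc n) * z) ^ Suc n * (\<Prod>j<n. 1 + of_real (\<beta> j) * z)"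

lemma coeffs_nonneg_monomial: "coeffs_nonneg (\<lambda>z. z ^ l)"
  using coeffs_nonneg_power[OF coeffs_nonneg_ident] .

lemma coeffs_nonneg_finite_product: "coeffs_nonneg (\<lambda>z. \<Prod>j<n. 1 + of_real (\<beta> j) * z)"
  by (rule coeffs_nonneg_prod, rule coeffs_nonneg_linear[OF \<beta>_nonneg[rule_format]])

lemma coeffs_nonneg_partial_product: "coeffs_nonneg (partial_product n)"
  unfolding partial_product_def
  by (rule coeffs_nonneg_mult[OF coeffs_nonneg_mult[OF coeffs_nonneg_monomial
        coeffs_nonneg_exp_linear[OF \<alpha>_nonneg]] coeffs_nonneg_finite_product])

lemma coeffs_nonneg_polynomial_approximant: "coeffs_nonneg (polynomial_approximant n)"
proof -
  have "0 \<le> \<alpha> / Suc n"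
    using \<alpha>_nonneg by simp
  then show ?thesis
    unfolding polynomial_approximant_def
    by (rule coeffs_nonneg_mult[OF coeffs_nonneg_mult[OF coeffs_nonneg_monomial
          coeffs_nonneg_power[OF coeffs_nonneg_linear]] coeffs_nonneg_finite_product])
qed

lemma coeffs_le_partial_product_Suc: "coeffs_le (partial_product n) (partial_product (Suc n))"
proof -
  note \<beta>_n = \<beta>_nonneg[rule_format, of n]
  have "coeffs_le (\<lambda>z. partial_product n z * 1)
      (\<lambda>z. partial_product n z * (1 + of_real (\<beta> n) * z))"
    by (rule coeffs_le_mult[OF coeffs_nonneg_partial_product _ coeffs_nonneg_partial_product
          coeffs_nonneg_linear[OF \<beta>_n] coeffs_le_refl coeffs_le_one_linear[OF \<beta>_n]])
      (simp add: coeffs_nonneg_const less_eq_complex_def)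
  moreover have "(\<lambda>z. partial_product n z * (1 + of_real (\<beta> n) * z)) = partial_product (Suc n)"
    by (simp add: fun_eq_iff partial_product_def lessThan_Suc mult_ac)
  ultimately show ?thesis
    by simp
qed

text \<open>The key comparison \<open>(1 + \<alpha> z / (n + 1))\<^sup>n\<^sup>+\<^sup>1 \<le> exp (\<alpha> z)\<close> holds factorwise,
  after writing \<open>exp (\<alpha> z) = exp (\<alpha> z / (n + 1))\<^sup>n\<^sup>+\<^sup>1\<close>.\<close>

lemma coeffs_le_polynomial_approximant: "coeffs_le (polynomial_approximant n) (partial_product n)"
proof -
  define c where "c = \<alpha> / Suc n"
  have c_nonneg: "0 \<le> c"
    using \<alpha>_nonneg by (simp add: c_def)
  have exp_power: "exp (of_real c * z) ^ Suc n = exp (of_real \<alpha> * z)" for z :: complex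
  proof -
    have "exp (of_real c * z) ^ Suc n = exp (of_real (Suc n * c) * z)"
      by (simp only: exp_of_nat_mult[symmetric] of_real_mult of_real_of_nat_eq mult.assoc)
    then show ?thesis
      by (simp add: c_def)
  qed
  have "coeffs_le (\<lambda>z. (1 + of_real c * z) ^ Suc n) (\<lambda>z. exp (of_real c * z) ^ Suc n)"
    by (rule coeffs_le_power[OF coeffs_nonneg_linear coeffs_nonneg_exp_linear
          coeffs_le_linear_exp_linear]) (use c_nonneg in simp_all)
  then have binomial_le_exp: "coeffs_le (\<lambda>z. (1 + of_real c * z) ^ Suc n) (\<lambda>z. exp (of_real \<alpha> * z))"
    by (simp only: exp_power)
  note binomial_nonneg = coeffs_nonneg_power[OF coeffs_nonneg_linear[OF c_nonneg], of "Suc n"]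
  note exp_nonneg = coeffs_nonneg_exp_linear[OF \<alpha>_nonneg]
  have "coeffs_le (\<lambda>z. z ^ l * (1 + of_real c * z) ^ Suc n) (\<lambda>z. z ^ l * exp (of_real \<alpha> * z))"
    by (rule coeffs_le_mult[OF coeffs_nonneg_monomial binomial_nonneg coeffs_nonneg_monomial
          exp_nonneg coeffs_le_refl binomial_le_exp])
  then have "coeffs_le (\<lambda>z. z ^ l * (1 + of_real c * z) ^ Suc n * (\<Prod>j<n. 1 + of_real (\<beta> j) * z))
      (\<lambda>z. z ^ l * exp (of_real \<alpha> * z) * (\<Prod>j<n. 1 + of_real (\<beta> j) * z))"
    by (rule coeffs_le_mult[OF coeffs_nonneg_mult[OF coeffs_nonneg_monomial binomial_nonneg]
          coeffs_nonneg_finite_product coeffs_nonneg_mult[OF coeffs_nonneg_monomial exp_nonneg]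
          coeffs_nonneg_finite_product _ coeffs_le_refl])
  then show ?thesis
    by (simp only: polynomial_approximant_def[abs_def] partial_product_def[abs_def] c_def)
qed

lemma polynomial_approximant_in_P_plus: "(\<lambda>z. C * polynomial_approximant n z) \<in> P_plus"
proof -
  define xs where "xs = replicate (Suc n) (\<alpha> / Suc n) @ map \<beta> [0..<n]"
  have "\<forall>x\<in>set xs. 0 \<le> x"
    using \<alpha>_nonneg \<beta>_nonneg by (auto simp: xs_def)
  then have "(\<lambda>z. C * z ^ l * (\<Prod>x\<leftarrow>xs. 1 + of_real x * z)) \<in> P_plus"
    by (rule monomial_product_in_P_plus)
  moreover have "(\<lambda>z. C * z ^ l * (\<Prod>x\<leftarrow>xs. 1 + of_real x * z)) = (\<lambda>z. C * polynomial_approximant n z)"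
    by (simp only: xs_def polynomial_approximant_def map_append prod_list.append map_replicate
        prod_list_replicate map_map o_def prod_list_map_upt_eq_prod_lessThan mult.assoc)
  ultimately show ?thesis
    by simp
qed

lemma polynomial_approximant_tendsto_at_1:
  assumes "(\<lambda>n. partial_product n 1) \<longlonglongrightarrow> w"
  shows "(\<lambda>n. polynomial_approximant n 1) \<longlonglongrightarrow> w"
proof -
  have "(\<lambda>n. (1 + \<alpha> / real n) ^ n) \<longlonglongrightarrow> exp \<alpha>"
    by (rule tendsto_exp_limit_sequentially)
  then have "(\<lambda>n. of_real ((1 + \<alpha> / Suc n) ^ Suc n / exp \<alpha>) * partial_product n 1)
      \<longlonglongrightarrow> of_real (exp \<alpha> / exp \<alpha>) * w"
    by (intro tendsto_intros assms LIMSEQ_Suc) simp_all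
  moreover have "of_real ((1 + \<alpha> / Suc n) ^ Suc n / exp \<alpha>) * partial_product n 1
      = polynomial_approximant n 1" for n
    by (simp add: partial_product_def polynomial_approximant_def exp_of_real)
  ultimately show ?thesis
    by simp
qed

lemma polynomial_approximant_coeffs:
  assumes lim: "\<And>z. (\<lambda>n. partial_product n z) \<longlonglongrightarrow> F z" and holF: "F holomorphic_on UNIV"
  shows "coeffs_le (polynomial_approximant n) F"
    and "(\<lambda>n. deriv0 k (polynomial_approximant n)) \<longlonglongrightarrow> deriv0 k F"
proof -
  have le: "coeffs_le (polynomial_approximant n) F" for n
    using coeffs_le_polynomial_approximant
      coeffs_le_limit[OF coeffs_nonneg_partial_product coeffs_le_partial_product_Suc lim holF]
    by (rule coeffs_le_trans)
  then show "coeffs_le (polynomial_approximant n) F" .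
  show "(\<lambda>n. deriv0 k (polynomial_approximant n)) \<longlonglongrightarrow> deriv0 k F"
    by (rule coeffs_tendsto_of_le[OF coeffs_nonneg_polynomial_approximant le holF
          polynomial_approximant_tendsto_at_1[OF lim]])
qed

end

lemma coeffs_scaled_approximation:
  assumes nonneg: "\<And>n. coeffs_nonneg (Q n)" and le: "\<And>n. coeffs_le (Q n) F"
    and holF: "F holomorphic_on UNIV" and lim: "\<And>k. (\<lambda>n. deriv0 k (Q n)) \<longlonglongrightarrow> deriv0 k F"
  shows "norm (deriv0 k (\<lambda>z. C * Q n z - C * F z)) \<le> norm (deriv0 k (\<lambda>z. C * F z))"
    and "(\<lambda>n. deriv0 k (\<lambda>z. C * Q n z - C * F z)) \<longlonglongrightarrow> 0"
proof -
  have holQ: "Q n holomorphic_on UNIV" for n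
    using nonneg by (rule coeffs_nonneg_holomorphic)
  have scaled_F: "deriv0 k (\<lambda>z. C * F z) = C * deriv0 k F" for k
    by (rule higher_deriv_cmult[OF holF UNIV_I open_UNIV])
  have scaled_diff: "deriv0 k (\<lambda>z. C * Q n z - C * F z) = C * (deriv0 k (Q n) - deriv0 k F)" for n k
    using higher_deriv_diff[of "\<lambda>z. C * Q n z" UNIV "\<lambda>z. C * F z" 0 k]
      higher_deriv_cmult[OF holQ UNIV_I open_UNIV] scaled_F holQ holF
    by (simp add: holomorphic_on_mult algebra_simps)
  have "0 \<le> deriv0 k (Q n)" "deriv0 k (Q n) \<le> deriv0 k F"
    using nonneg le by (auto simp: coeffs_nonneg_def coeffs_le_def)
  then have "norm (deriv0 k (Q n) - deriv0 k F) \<le> norm (deriv0 k F)"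
    by (simp add: less_eq_complex_def cmod_def)
  then show "norm (deriv0 k (\<lambda>z. C * Q n z - C * F z)) \<le> norm (deriv0 k (\<lambda>z. C * F z))"
    by (simp add: scaled_diff scaled_F norm_mult mult_left_mono)
  have "(\<lambda>n. C * (deriv0 k (Q n) - deriv0 k F)) \<longlonglongrightarrow> C * (deriv0 k F - deriv0 k F)"
    by (intro tendsto_intros lim)
  then show "(\<lambda>n. deriv0 k (\<lambda>z. C * Q n z - C * F z)) \<longlonglongrightarrow> 0"
    by (simp add: scaled_diff)
qed

lemma L_plus_coeffwise_approximation:
  assumes f: "f \<in> L_plus" and holf: "f holomorphic_on UNIV"
  obtains p where "\<And>n. p n \<in> P_plus"
    and "\<And>n k. norm (deriv0 k (\<lambda>z. p n z - f z)) \<le> norm (deriv0 k f)"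
    and "\<And>k. (\<lambda>n. deriv0 k (\<lambda>z. p n z - f z)) \<longlonglongrightarrow> 0"
proof -
  obtain C l \<alpha> \<beta> where \<alpha>: "0 \<le> \<alpha>" and \<beta>: "\<forall>j. 0 \<le> \<beta> j"
    and lim: "\<And>z. (\<lambda>n. C * z ^ l * exp (of_real \<alpha> * z) * (\<Prod>j<n. 1 + of_real (\<beta> j) * z))
      \<longlonglongrightarrow> f z"
    using f unfolding L_plus_def by blast
  show ?thesis
  proof (cases "C = 0")
    case True
    then have "f = (\<lambda>z. 0)"
      using lim by (simp add: fun_eq_iff LIMSEQ_const_iff)
    then show ?thesis
      using that[of "\<lambda>n z. 0"] polynomial_approximant_in_P_plus[OF \<alpha> \<beta>, of 0] by simp
  next
    case False
    define F where "F z = f z / C" for z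
    let ?Q = "polynomial_approximant l \<alpha> \<beta>"
    have f_eq: "f = (\<lambda>z. C * F z)"
      using False by (simp add: F_def fun_eq_iff)
    have holF: "F holomorphic_on UNIV"
      unfolding F_def using holf by (intro holomorphic_intros) auto
    have G_tendsto: "(\<lambda>n. partial_product l \<alpha> \<beta> n z) \<longlonglongrightarrow> F z" for z
      using tendsto_divide[OF lim tendsto_const False, of z]
      by (simp add: False F_def partial_product_def[OF \<alpha> \<beta>] mult.assoc)
    have Q_nonneg: "coeffs_nonneg (?Q n)" for n
      using \<alpha> \<beta> by (rule coeffs_nonneg_polynomial_approximant)
    note Q_le_F = polynomial_approximant_coeffs(1)[OF \<alpha> \<beta> G_tendsto holF]
    note Q_tendsto = polynomial_approximant_coeffs(2)[OF \<alpha> \<beta> G_tendsto holF]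
    show ?thesis
    proof (rule that)
      show "(\<lambda>z. C * ?Q n z) \<in> P_plus" for n
        using \<alpha> \<beta> by (rule polynomial_approximant_in_P_plus)
      show "norm (deriv0 k (\<lambda>z. C * ?Q n z - f z)) \<le> norm (deriv0 k f)" for n k
        unfolding f_eq using Q_nonneg Q_le_F holF Q_tendsto by (rule coeffs_scaled_approximation)
      show "(\<lambda>n. deriv0 k (\<lambda>z. C * ?Q n z - f z)) \<longlonglongrightarrow> 0" for k
        unfolding f_eq using Q_nonneg Q_le_F holF Q_tendsto by (rule coeffs_scaled_approximation)
    qed
  qed
qed

section \<open>Approximation in the seminorms\<close>

lemma seminorm_b_le:
  "(\<And>k. norm (deriv0 k g) / b ^ k \<le> c) \<Longrightarrow> seminorm_b b g \<le> ereal c"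
  unfolding seminorm_b_def by (rule SUP_least) simp

lemma seminorm_b_bound:
  assumes "seminorm_b b f < \<infinity>"
  obtains M where "\<And>k. norm (deriv0 k f) / b ^ k \<le> M"
proof -
  have "ereal (norm (deriv0 k f) / b ^ k) \<le> seminorm_b b f" for k
    unfolding seminorm_b_def by (rule SUP_upper) simp
  with assms that show ?thesis
    by (cases "seminorm_b b f") force+
qed

lemma seminorm_b_coeffs_eventually_less:
  assumes "seminorm_b b' f < \<infinity>" and b': "0 < b'" "b' < b" and \<epsilon>: "0 < \<epsilon>"
  shows "\<forall>\<^sub>F k in sequentially. norm (deriv0 k f) / b ^ k < \<epsilon>"
proof -
  obtain M where M: "\<And>k. norm (deriv0 k f) / b' ^ k \<le> M"
    using seminorm_b_bound[OF assms(1)] by blast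
  have "(\<lambda>k. M * (b' / b) ^ k) \<longlonglongrightarrow> M * 0"
    using b' by (intro tendsto_intros) simp
  then have "\<forall>\<^sub>F k in sequentially. M * (b' / b) ^ k < \<epsilon>"
    using \<epsilon> by (intro order_tendstoD(2)) auto
  then show ?thesis
  proof eventually_elim
    case (elim k)
    have "norm (deriv0 k f) / b ^ k = norm (deriv0 k f) / b' ^ k * (b' / b) ^ k"
      using b' by (simp add: power_divide)
    also have "\<dots> \<le> M * (b' / b) ^ k"
      using b' by (intro mult_right_mono M) simp
    finally show ?case
      using elim by linarith
  qed
qed

text \<open>Dominated convergence for the seminorm: the dominating coefficients make the tail of
  the \<open>b\<close>-seminorm uniformly small, and only finitely many coefficients remain.\<close>

lemma seminorm_b_eventually_less:
  assumes fin: "seminorm_b b' f < \<infinity>" and b': "0 < b'" "b' < b" and \<epsilon>: "0 < \<epsilon>"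
    and dom: "\<And>n k. norm (deriv0 k (g n)) \<le> norm (deriv0 k f)"
    and lim: "\<And>k. (\<lambda>n. deriv0 k (g n)) \<longlonglongrightarrow> 0"
  shows "\<forall>\<^sub>F n in sequentially. seminorm_b b (g n) < ereal \<epsilon>"
proof -
  obtain K where K: "\<And>k. K \<le> k \<Longrightarrow> norm (deriv0 k f) / b ^ k < \<epsilon> / 2"
    using seminorm_b_coeffs_eventually_less[OF fin b', of "\<epsilon> / 2"] \<epsilon>
    unfolding eventually_sequentially by auto
  have tail: "norm (deriv0 k (g n)) / b ^ k \<le> \<epsilon> / 2" if "K \<le> k" for n k
  proof -
    have "norm (deriv0 k (g n)) / b ^ k \<le> norm (deriv0 k f) / b ^ k"
      using b' by (intro divide_right_mono dom) simp
    then show ?thesis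
      using K[OF that] by linarith
  qed
  have "\<forall>\<^sub>F n in sequentially. norm (deriv0 k (g n)) / b ^ k < \<epsilon> / 2" for k
  proof (rule order_tendstoD(2))
    show "(\<lambda>n. norm (deriv0 k (g n)) / b ^ k) \<longlonglongrightarrow> 0"
      using tendsto_divide[OF tendsto_norm_zero[OF lim] tendsto_const, of "b ^ k"] b' by simp
  qed (use \<epsilon> in simp)
  then have "\<forall>\<^sub>F n in sequentially. \<forall>k\<in>{..<K}. norm (deriv0 k (g n)) / b ^ k < \<epsilon> / 2"
    by (simp add: eventually_ball_finite)
  then show ?thesis
  proof eventually_elim
    case (elim n)
    have "norm (deriv0 k (g n)) / b ^ k \<le> \<epsilon> / 2" for k
    proof (cases "k < K")
      case True
      then show ?thesis
        using elim by (meson lessThan_iff less_imp_le)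
    qed (rule tail, simp)
    then have "seminorm_b b (g n) \<le> ereal (\<epsilon> / 2)"
      by (rule seminorm_b_le)
    also have "\<dots> < ereal \<epsilon>"
      using \<epsilon> by simp
    finally show ?case .
  qed
qed

theorem corollary1p5:
  fixes a :: real
  assumes "a \<ge> 0"
  shows "\<forall>f \<in> L_plus_a a. \<forall>B \<epsilon>. finite B \<and> B \<subseteq> {b. b > a} \<and> \<epsilon> > 0 \<longrightarrow>
           (\<exists>p \<in> P_plus. \<forall>b \<in> B. seminorm_b b (\<lambda>z. p z - f z) < ereal \<epsilon>)"
proof (intro ballI allI impI)
  fix f B and \<epsilon> :: real
  assume "f \<in> L_plus_a a" and B: "finite B \<and> B \<subseteq> {b. b > a} \<and> \<epsilon> > 0"
  then have "f \<in> L_plus" "f holomorphic_on UNIV" and fin: "\<And>b. a < b \<Longrightarrow> seminorm_b b f < \<infinity>"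
    by (auto simp: L_plus_a_def A_space_def)
  obtain p where p: "\<And>n. p n \<in> P_plus"
    and dom: "\<And>n k. norm (deriv0 k (\<lambda>z. p n z - f z)) \<le> norm (deriv0 k f)"
    and lim: "\<And>k. (\<lambda>n. deriv0 k (\<lambda>z. p n z - f z)) \<longlonglongrightarrow> 0"
    using L_plus_coeffwise_approximation[OF \<open>f \<in> L_plus\<close> \<open>f holomorphic_on UNIV\<close>] by blast
  have "\<forall>\<^sub>F n in sequentially. seminorm_b b (\<lambda>z. p n z - f z) < ereal \<epsilon>" if "b \<in> B" for b
    using B that assms
    by (intro seminorm_b_eventually_less[OF fin[of "(a + b) / 2"] _ _ _ dom lim]) auto
  then have "\<forall>\<^sub>F n in sequentially. \<forall>b\<in>B. seminorm_b b (\<lambda>z. p n z - f z) < ereal \<epsilon>"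
    using B by (simp add: eventually_ball_finite)
  then obtain n where "\<forall>b\<in>B. seminorm_b b (\<lambda>z. p n z - f z) < ereal \<epsilon>"
    using eventually_happens'[OF sequentially_bot] by blast
  then show "\<exists>p\<in>P_plus. \<forall>b\<in>B. seminorm_b b (\<lambda>z. p z - f z) < ereal \<epsilon>"
    using p by blast
qed

end
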